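(* Let $A$ be an $F_n$-good $n\times n$ matrix and suppose $A_{i,j}=1$. If $i'\in\{i-1,i+1\}$ with $1\leq i'\leq n$ and $A_{i',k}=1$ for some column $k$, then $k\in\{j-1,j+1\}$.
   Context: $F_n$ is the set of vectors $\vec{x}=(x_1,\ldots,x_n)\in\mathbb{Z}_2^n$ with no $i$ such that $x_i=x_{i+1}=1$. An $n\times n$ matrix $A$ over $\mathbb{Z}_2$ is $F_n$-good if it is invertible and $A\vec{x}\in F_n$ for all $\vec{x}\in F_n$. $A_{i,j}$ denotes the entry of $A$ in row $i$, column $j$. *)

theory Defs
  imports "HOL-Library.Z2" "Jordan_Normal_Form.Matrix"
begin

text \<open>Vectors over Z_2 (type bit) of length n with no two consecutive ones.
  Indices are 0-based: components 0..n-1 correspond to x_1..x_n.\<close>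
definition F :: "nat \<Rightarrow> bit vec set" where
  "F n = {x. x \<in> carrier_vec n \<and> (\<forall>i. i + 1 < n \<longrightarrow> \<not> (x $ i = 1 \<and> x $ (i + 1) = 1))}"

definition F_good :: "nat \<Rightarrow> bit mat \<Rightarrow> bool" where
  "F_good n A \<longleftrightarrow> A \<in> carrier_mat n n \<and> invertible_mat A \<and> (\<forall>x \<in> F n. A *\<^sub>v x \<in> F n)"

end

theory Submission
  imports Defs
begin

text \<open>An F_n-preserving matrix maps the indicator vector of {j} to column j, so every column
  lies in F_n. If A(i,j) = A(i+1,k) = 1 with k not adjacent to j, the columns j and k therefore
  vanish in rows i+1 and i respectively, and the indicator vector of {j, k}, which lies in F_n, is
  mapped to a vector with ones in the adjacent positions i and i+1.\<close>

definition indicator_vec :: "nat \<Rightarrow> nat set \<Rightarrow> bit vec" where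
  "indicator_vec n S = vec n (\<lambda>l. if l \<in> S then 1 else 0)"

lemma index_mult_mat_vec_indicator_vec:
  fixes A :: "bit mat"
  assumes "A \<in> carrier_mat m n" "S \<subseteq> {0..<n}" "r < m"
  shows "(A *\<^sub>v indicator_vec n S) $ r = (\<Sum>l\<in>S. A $$ (r, l))"
proof -
  have "(A *\<^sub>v indicator_vec n S) $ r = (\<Sum>l<n. A $$ (r, l) * (if l \<in> S then 1 else 0))"
    using assms by (auto simp: indicator_vec_def scalar_prod_def lessThan_atLeast0 intro!: sum.cong)
  also have "\<dots> = (\<Sum>l<n. if l \<in> S then A $$ (r, l) else 0)"
    by (rule sum.cong) simp_all
  also have "\<dots> = (\<Sum>l\<in>{..<n} \<inter> S. A $$ (r, l))"
    by (simp add: sum.inter_restrict)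
  also have "{..<n} \<inter> S = S"
    using assms(2) by auto
  finally show ?thesis .
qed

lemma indicator_vec_in_F:
  assumes "S \<subseteq> {0..<n}" "\<And>a. a \<in> S \<Longrightarrow> a + 1 \<notin> S"
  shows "indicator_vec n S \<in> F n"
  using assms unfolding F_def indicator_vec_def by auto

lemma F_no_adjacent_ones:
  assumes "y \<in> F n" "i + 1 < n"
  shows "\<not> (y $ i = 1 \<and> y $ (i + 1) = 1)"
  using assms unfolding F_def by blast

lemma col_in_F_if_preserves_F:
  fixes A :: "bit mat"
  assumes A: "A \<in> carrier_mat n n" and preserves: "\<forall>x \<in> F n. A *\<^sub>v x \<in> F n" and "j < n"
  shows "col A j \<in> F n"
proof -
  have "A *\<^sub>v indicator_vec n {j} \<in> F n"
    using preserves indicator_vec_in_F[of "{j}" n] \<open>j < n\<close> by auto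
  moreover have "A *\<^sub>v indicator_vec n {j} = col A j"
  proof (rule eq_vecI)
    show "(A *\<^sub>v indicator_vec n {j}) $ r = col A j $ r" if "r < dim_vec (col A j)" for r
      using index_mult_mat_vec_indicator_vec[OF A, of "{j}" r] A \<open>j < n\<close> that by simp
  qed (use A in simp)
  ultimately show ?thesis by simp
qed

lemma preserves_F_adjacent_rows:
  fixes A :: "bit mat"
  assumes A: "A \<in> carrier_mat n n" and preserves: "\<forall>x \<in> F n. A *\<^sub>v x \<in> F n"
    and "i + 1 < n" "j < n" "k < n" "A $$ (i, j) = 1" "A $$ (i + 1, k) = 1"
  shows "k + 1 = j \<or> k = j + 1"
proof (rule ccontr)
  assume not_adjacent: "\<not> (k + 1 = j \<or> k = j + 1)"
  have col_j: "col A j \<in> F n" and col_k: "col A k \<in> F n"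
    using col_in_F_if_preserves_F[OF A preserves] assms(4,5) by auto
  have "A $$ (i + 1, j) \<noteq> 1"
    using F_no_adjacent_ones[OF col_j, of i] assms(3,4,6) A by auto
  then have "j \<noteq> k" and below_j: "A $$ (i + 1, j) = 0"
    using assms(7) bit_not_one_iff by auto
  have "A $$ (i, k) \<noteq> 1"
    using F_no_adjacent_ones[OF col_k, of i] assms(3,5,7) A by auto
  then have right_of_i: "A $$ (i, k) = 0"
    using bit_not_one_iff by auto
  let ?y = "A *\<^sub>v indicator_vec n {j, k}"
  have "indicator_vec n {j, k} \<in> F n"
    using assms(4,5) not_adjacent by (intro indicator_vec_in_F) auto
  then have "?y \<in> F n"
    using preserves by blast
  moreover have "?y $ r = A $$ (r, j) + A $$ (r, k)" if "r < n" for r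
    using index_mult_mat_vec_indicator_vec[OF A, of "{j, k}"] that assms(4,5) \<open>j \<noteq> k\<close> by simp
  then have "?y $ i = 1" and "?y $ (i + 1) = 1"
    using assms(3,6,7) below_j right_of_i by auto
  ultimately show False
    using F_no_adjacent_ones assms(3) by blast
qed

theorem lemma1:
  fixes A :: "bit mat" and n i j i' k :: nat
  assumes "F_good n A"
    and "i < n" and "j < n" and "A $$ (i, j) = 1"
    and "i' + 1 = i \<or> i' = i + 1" and "i' < n"
    and "k < n" and "A $$ (i', k) = 1"
  shows "k + 1 = j \<or> k = j + 1"
proof -
  have A: "A \<in> carrier_mat n n" and preserves: "\<forall>x \<in> F n. A *\<^sub>v x \<in> F n"
    using assms(1) unfolding F_good_def by auto
  from assms(5) show ?thesis
  proof
    assume "i' + 1 = i"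
    then show ?thesis
      using preserves_F_adjacent_rows[OF A preserves, of i' k j] assms by auto
  next
    assume "i' = i + 1"
    then show ?thesis
      using preserves_F_adjacent_rows[OF A preserves, of i j k] assms by auto
  qed
qed

end
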